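(* Let $\varrho:\mathcal{Z}\to\mathbb{R}\cup\{+\infty\}$ be a coherent risk measure with preference to small outcomes that satisfies property T: $\varrho[X+\alpha e^i]=\varrho[X]+\alpha$ for all $X\in\mathcal{Z}$, $\alpha\in\mathbb{R}$, $i=1,\dots,m$. Then $\varrho$ is linear on constant vectors, i.e. the map $\mathbb{R}^m\ni a\mapsto\varrho[a]$ (with $a$ viewed as a constant random vector) is linear.
   Context: $(\Omega,\mathcal{F},P)$ is a probability space, $m\ge1$, $p\in[1,\infty)$, $\mathcal{Z}=\mathcal{L}_p(\Omega,\mathcal{F},P;\mathbb{R}^m)$ with norm topology. $e^i\in\mathbb{R}^m$ is the $i$-th unit vector and $\mathbb{I}$ the constant random vector with all components $1$. A coherent risk measure with preference to small outcomes is a lower semicontinuous functional $\varrho:\mathcal{Z}\to\mathbb{R}\cup\{+\infty\}$ with nonempty domain satisfying: (A1) convexity; (A2) $X_i\ge Y_i$ a.s. for all $i$ implies $\varrho[X]\ge\varrho[Y]$; (A3) $\varrho[tX]=t\varrho[X]$ for $t>0$; (A4) $\varrho[X+a\mathbb{I}]=\varrho[X]+a\varrho[\mathbb{I}]$ for all $X\in\mathcal{Z}$, $a\in\mathbb{R}$. *)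

theory Defs
  imports "HOL-Probability.Probability"
begin

text \<open>The space Z = L_p(Omega, F, P; R^m), represented by measurable representatives
  (functions); R^m is real^'m with the Euclidean norm.\<close>

definition Lp_space :: "'a measure \<Rightarrow> real \<Rightarrow> ('a \<Rightarrow> real^'m) set" where
  "Lp_space M p = {X. X \<in> borel_measurable M \<and> integrable M (\<lambda>\<omega>. norm (X \<omega>) powr p)}"

definition Lp_dist :: "'a measure \<Rightarrow> real \<Rightarrow> ('a \<Rightarrow> real^'m) \<Rightarrow> ('a \<Rightarrow> real^'m) \<Rightarrow> real" where
  "Lp_dist M p X Y = (integral\<^sup>L M (\<lambda>\<omega>. norm (X \<omega> - Y \<omega>) powr p)) powr (1 / p)"

definition ones :: "'a \<Rightarrow> real^'m" where
  "ones = (\<lambda>\<omega>. \<chi> i. 1)"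

definition coherent_risk_measure ::
  "'a measure \<Rightarrow> real \<Rightarrow> (('a \<Rightarrow> real^'m) \<Rightarrow> ereal) \<Rightarrow> bool" where
  "coherent_risk_measure M p \<rho> \<longleftrightarrow>
     \<comment> \<open>values in R \<union> {+\<infinity>}\<close>
     (\<forall>X \<in> Lp_space M p. \<rho> X \<noteq> -\<infinity>) \<and>
     \<comment> \<open>nonempty domain\<close>
     (\<exists>X \<in> Lp_space M p. \<rho> X < \<infinity>) \<and>
     \<comment> \<open>lower semicontinuity w.r.t. the L_p norm topology\<close>
     (\<forall>X Xs. X \<in> Lp_space M p \<longrightarrow> (\<forall>n. Xs n \<in> Lp_space M p) \<longrightarrow>
        (\<lambda>n. Lp_dist M p (Xs n) X) \<longlonglongrightarrow> 0 \<longrightarrow>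
        \<rho> X \<le> liminf (\<lambda>n. \<rho> (Xs n))) \<and>
     \<comment> \<open>(A1) convexity\<close>
     (\<forall>X \<in> Lp_space M p. \<forall>Y \<in> Lp_space M p. \<forall>t::real. 0 \<le> t \<and> t \<le> 1 \<longrightarrow>
        \<rho> (\<lambda>\<omega>. t *\<^sub>R X \<omega> + (1 - t) *\<^sub>R Y \<omega>) \<le> ereal t * \<rho> X + ereal (1 - t) * \<rho> Y) \<and>
     \<comment> \<open>(A2) monotonicity\<close>
     (\<forall>X \<in> Lp_space M p. \<forall>Y \<in> Lp_space M p.
        (AE \<omega> in M. \<forall>i. X \<omega> $ i \<ge> Y \<omega> $ i) \<longrightarrow> \<rho> X \<ge> \<rho> Y) \<and>
     \<comment> \<open>(A3) positive homogeneity\<close>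
     (\<forall>X \<in> Lp_space M p. \<forall>t::real. t > 0 \<longrightarrow> \<rho> (\<lambda>\<omega>. t *\<^sub>R X \<omega>) = ereal t * \<rho> X) \<and>
     \<comment> \<open>(A4) translation by multiples of the all-ones vector\<close>
     (\<forall>X \<in> Lp_space M p. \<forall>a::real.
        \<rho> (\<lambda>\<omega>. X \<omega> + a *\<^sub>R ones \<omega>) = \<rho> X + ereal a * \<rho> ones)"

definition property_T :: "'a measure \<Rightarrow> real \<Rightarrow> (('a \<Rightarrow> real^'m) \<Rightarrow> ereal) \<Rightarrow> bool" where
  "property_T M p \<rho> \<longleftrightarrow>
     (\<forall>X \<in> Lp_space M p. \<forall>\<alpha>::real. \<forall>i.
        \<rho> (\<lambda>\<omega>. X \<omega> + \<alpha> *\<^sub>R axis i 1) = \<rho> X + ereal \<alpha>)"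

end

theory Submission
  imports Defs
begin

text \<open>Lower semicontinuity and positive homogeneity force \<open>\<rho>[0] = 0\<close>: for any \<open>X\<close> with
  \<open>\<rho>[X] < \<infinity>\<close>, the vectors \<open>X/n\<close> tend to \<open>0\<close> while \<open>\<rho>[X/n] = \<rho>[X]/n \<rightarrow> 0\<close>, so \<open>\<rho>[0] \<le> 0\<close>
  is finite, and \<open>\<rho>[0] = \<rho>[2\<cdot>0] = 2\<rho>[0]\<close>. Writing a constant vector as \<open>a = \<Sum>\<^sub>i a\<^sub>i e\<^sup>i\<close> and
  applying property T once per coordinate then gives \<open>\<rho>[a] = \<rho>[0] + \<Sum>\<^sub>i a\<^sub>i = \<Sum>\<^sub>i a\<^sub>i\<close>,
  a linear function of \<open>a\<close>.\<close>

lemma zero_in_Lp_space: "(\<lambda>\<omega>. 0) \<in> Lp_space M p"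
  unfolding Lp_space_def by simp

lemma const_in_Lp_space:
  assumes "finite_measure M"
  shows "(\<lambda>\<omega>. c) \<in> Lp_space M p"
  using assms unfolding Lp_space_def by (simp add: finite_measure.integrable_const)

lemma scaleR_in_Lp_space:
  assumes "X \<in> Lp_space M p" "0 \<le> t"
  shows "(\<lambda>\<omega>. t *\<^sub>R X \<omega>) \<in> Lp_space M p"
proof -
  have "(\<lambda>\<omega>. norm (t *\<^sub>R X \<omega>) powr p) = (\<lambda>\<omega>. t powr p * norm (X \<omega>) powr p)"
    using assms(2) by (simp add: powr_mult)
  then show ?thesis
    using assms(1) unfolding Lp_space_def by (auto intro: integrable_mult_right)
qed

lemma Lp_dist_scaleR_zero:
  assumes "0 \<le> t" "0 < p"
  shows "Lp_dist M p (\<lambda>\<omega>. t *\<^sub>R X \<omega>) (\<lambda>\<omega>. 0) = t * Lp_dist M p X (\<lambda>\<omega>. 0)"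
proof -
  define I where "I = integral\<^sup>L M (\<lambda>\<omega>. norm (X \<omega>) powr p)"
  have "(\<lambda>\<omega>. norm (t *\<^sub>R X \<omega> - 0) powr p) = (\<lambda>\<omega>. t powr p * norm (X \<omega>) powr p)"
    using assms(1) by (simp add: powr_mult)
  then have "Lp_dist M p (\<lambda>\<omega>. t *\<^sub>R X \<omega>) (\<lambda>\<omega>. 0) = (t powr p * I) powr (1/p)"
    unfolding Lp_dist_def I_def by simp
  also have "\<dots> = (t powr p) powr (1/p) * I powr (1/p)"
    by (rule powr_mult)
  also have "(t powr p) powr (1/p) = t"
    using assms by (simp add: powr_powr)
  finally show ?thesis
    unfolding Lp_dist_def I_def by simp
qed

lemma coherent_risk_measure_zero_le:
  assumes "coherent_risk_measure M p \<rho>" "0 < p"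
  shows "\<rho> (\<lambda>\<omega>. 0) \<le> 0"
proof -
  note crm = assms(1)[unfolded coherent_risk_measure_def]
  obtain X where X: "X \<in> Lp_space M p" "\<rho> X < \<infinity>"
    using crm by blast
  moreover have "\<rho> X \<noteq> -\<infinity>"
    using crm X by blast
  ultimately obtain r where r: "\<rho> X = ereal r"
    by (cases "\<rho> X") auto
  define Xs where "Xs n = (\<lambda>\<omega>. (1 / Suc n) *\<^sub>R X \<omega>)" for n
  have Xs_Lp: "\<forall>n. Xs n \<in> Lp_space M p"
    unfolding Xs_def using scaleR_in_Lp_space[OF X(1)] by simp
  have "(\<lambda>n. (1 / Suc n) * Lp_dist M p X (\<lambda>\<omega>. 0)) \<longlonglongrightarrow> 0 * Lp_dist M p X (\<lambda>\<omega>. 0)"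
    by (intro tendsto_intros LIMSEQ_inverse_real_of_nat[unfolded inverse_eq_divide])
  moreover have "Lp_dist M p (Xs n) (\<lambda>\<omega>. 0) = (1 / Suc n) * Lp_dist M p X (\<lambda>\<omega>. 0)" for n
    unfolding Xs_def by (rule Lp_dist_scaleR_zero[OF _ assms(2)]) simp
  ultimately have "(\<lambda>n. Lp_dist M p (Xs n) (\<lambda>\<omega>. 0)) \<longlonglongrightarrow> 0"
    by simp
  then have "\<rho> (\<lambda>\<omega>. 0) \<le> liminf (\<lambda>n. \<rho> (Xs n))"
    using crm zero_in_Lp_space Xs_Lp by blast
  also have "(\<lambda>n. \<rho> (Xs n)) = (\<lambda>n. ereal (r / Suc n))"
    using crm X r unfolding Xs_def by simp
  also have "liminf \<dots> = 0"
  proof (rule lim_imp_Liminf[OF trivial_limit_sequentially])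
    have "(\<lambda>n. r * inverse (Suc n)) \<longlonglongrightarrow> r * 0"
      by (intro tendsto_intros LIMSEQ_inverse_real_of_nat)
    then show "(\<lambda>n. ereal (r / Suc n)) \<longlonglongrightarrow> 0"
      by (simp add: zero_ereal_def divide_inverse)
  qed
  finally show ?thesis .
qed

lemma coherent_risk_measure_zero:
  assumes "coherent_risk_measure M p \<rho>" "0 < p"
  shows "\<rho> (\<lambda>\<omega>. 0) = 0"
proof -
  note crm = assms(1)[unfolded coherent_risk_measure_def]
  have "\<rho> (\<lambda>\<omega>. 0) \<noteq> -\<infinity>"
    using crm zero_in_Lp_space by blast
  then obtain s where s: "\<rho> (\<lambda>\<omega>. 0) = ereal s"
    using coherent_risk_measure_zero_le[OF assms] by (cases "\<rho> (\<lambda>\<omega>. 0)") auto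
  have hom: "\<forall>X \<in> Lp_space M p. \<forall>t::real. t > 0 \<longrightarrow> \<rho> (\<lambda>\<omega>. t *\<^sub>R X \<omega>) = ereal t * \<rho> X"
    using crm by blast
  have "\<rho> (\<lambda>\<omega>. (2::real) *\<^sub>R 0) = ereal 2 * \<rho> (\<lambda>\<omega>. 0)"
    using hom[rule_format, OF zero_in_Lp_space, of 2] by simp
  then show ?thesis
    using s by (simp add: zero_ereal_def)
qed

lemma property_T_const_add:
  assumes "finite_measure M" "property_T M p \<rho>"
  shows "\<rho> (\<lambda>\<omega>. c + v) = \<rho> (\<lambda>\<omega>. c) + ereal (\<Sum>i\<in>UNIV. v $ i)"
proof -
  have T: "\<rho> (\<lambda>\<omega>. X \<omega> + \<alpha> *\<^sub>R axis i 1) = \<rho> X + ereal \<alpha>" if "X \<in> Lp_space M p" for X \<alpha> i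
    using assms(2) that unfolding property_T_def by blast
  have "\<rho> (\<lambda>\<omega>. c + (\<Sum>i\<in>S. v $ i *\<^sub>R axis i 1)) = \<rho> (\<lambda>\<omega>. c) + ereal (\<Sum>i\<in>S. v $ i)"
    if "finite S" for S
    using that
  proof (induction S arbitrary: c rule: finite_induct)
    case empty
    then show ?case by (simp add: zero_ereal_def)
  next
    case (insert x F)
    have "\<rho> (\<lambda>\<omega>. c + (\<Sum>i\<in>insert x F. v $ i *\<^sub>R axis i 1))
        = \<rho> (\<lambda>\<omega>. (c + v $ x *\<^sub>R axis x 1) + (\<Sum>i\<in>F. v $ i *\<^sub>R axis i 1))"
      using insert.hyps by (simp add: algebra_simps)
    also have "\<dots> = \<rho> (\<lambda>\<omega>. c + v $ x *\<^sub>R axis x 1) + ereal (\<Sum>i\<in>F. v $ i)"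
      by (rule insert.IH)
    also have "\<rho> (\<lambda>\<omega>. c + v $ x *\<^sub>R axis x 1) = \<rho> (\<lambda>\<omega>. c) + ereal (v $ x)"
      using T[OF const_in_Lp_space[OF assms(1)]] by simp
    finally show ?case
      using insert.hyps by (simp add: add.assoc)
  qed
  from this[of UNIV] show ?thesis
    using basis_expansion[of v] by (simp add: scalar_mult_eq_scaleR)
qed

theorem corollary3:
  fixes M :: "'a measure" and p :: real and \<rho> :: "('a \<Rightarrow> real^'m) \<Rightarrow> ereal"
  assumes "prob_space M"
    and "1 \<le> p"
    and "coherent_risk_measure M p \<rho>"
    and "property_T M p \<rho>"
  shows "\<exists>f :: real^'m \<Rightarrow> real. linear f \<and> (\<forall>a. \<rho> (\<lambda>\<omega>. a) = ereal (f a))"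
proof (intro exI conjI allI)
  show "linear (\<lambda>a::real^'m. \<Sum>i\<in>UNIV. a $ i)"
    by (intro linear_compose_sum ballI bounded_linear.linear[OF bounded_linear_vec_nth])
  have "finite_measure M"
    using assms(1) by (rule prob_space.axioms)
  moreover have "\<rho> (\<lambda>\<omega>. 0) = 0"
    using assms(2,3) by (intro coherent_risk_measure_zero) auto
  ultimately show "\<rho> (\<lambda>\<omega>. a) = ereal (\<Sum>i\<in>UNIV. a $ i)" for a :: "real^'m"
    using property_T_const_add[OF _ assms(4), of 0 a] by simp
qed

end
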